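(* If a generalised binary matrix $\mathbf{Y}$ is minimally non-firm, then every row and every column of $\mathbf{Y}$ contains at least two non-zero entries (entries equal to $1$ or $?$).
   Context: A generalised binary matrix is a matrix with entries in $\{0,1,?\}$. For such $\mathbf{Y}$, $\mathrm{supp}(\mathbf{Y})=\{(i,j):y_{i,j}=1\}$. A submatrix indexed by $I\times J$ is obtained by deleting rows not in $I$ and columns not in $J$; it is proper if it omits at least one row or column. A rectangle of $\mathbf{Y}$ is a set $I\times J$ of positions containing no entry equal to $0$. An isolated set is a subset of $\mathrm{supp}(\mathbf{Y})$ no two distinct elements of which lie in a common rectangle; $i(\mathbf{Y})$ is the maximum size of an isolated set. $br(\mathbf{Y})$ is the minimum number of rectangles whose union contains $\mathrm{supp}(\mathbf{Y})$ ($?$ entries need not be covered). $\mathbf{Y}$ is minimally non-firm if $i(\mathbf{Y})<br(\mathbf{Y})$ and $i(\mathbf{Y}')=br(\mathbf{Y}')$ for every proper submatrix $\mathbf{Y}'$ of $\mathbf{Y}$. *)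

theory Defs
  imports Main
begin

datatype gentry = Zero | One | Quest

text \<open>A generalised binary matrix is given by a finite set of row indices R,
a finite set of column indices C and an entry function Y. A submatrix indexed
by I \<times> J (I \<subseteq> R, J \<subseteq> C) is the same entry function restricted to I and J.\<close>

definition supp :: "nat set \<Rightarrow> nat set \<Rightarrow> (nat \<Rightarrow> nat \<Rightarrow> gentry) \<Rightarrow> (nat \<times> nat) set" where
  "supp R C Y = {(i,j). i \<in> R \<and> j \<in> C \<and> Y i j = One}"

definition is_rectangle :: "nat set \<Rightarrow> nat set \<Rightarrow> (nat \<Rightarrow> nat \<Rightarrow> gentry) \<Rightarrow> (nat \<times> nat) set \<Rightarrow> bool" where
  "is_rectangle R C Y S \<longleftrightarrow>
     (\<exists>I J. I \<subseteq> R \<and> J \<subseteq> C \<and> S = I \<times> J \<and> (\<forall>i\<in>I. \<forall>j\<in>J. Y i j \<noteq> Zero))"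

definition isolated :: "nat set \<Rightarrow> nat set \<Rightarrow> (nat \<Rightarrow> nat \<Rightarrow> gentry) \<Rightarrow> (nat \<times> nat) set \<Rightarrow> bool" where
  "isolated R C Y X \<longleftrightarrow> X \<subseteq> supp R C Y \<and>
     (\<forall>x\<in>X. \<forall>y\<in>X. x \<noteq> y \<longrightarrow> \<not> (\<exists>S. is_rectangle R C Y S \<and> x \<in> S \<and> y \<in> S))"

definition iso_num :: "nat set \<Rightarrow> nat set \<Rightarrow> (nat \<Rightarrow> nat \<Rightarrow> gentry) \<Rightarrow> nat" where
  "iso_num R C Y = Max {card X | X. isolated R C Y X}"

definition br :: "nat set \<Rightarrow> nat set \<Rightarrow> (nat \<Rightarrow> nat \<Rightarrow> gentry) \<Rightarrow> nat" where
  "br R C Y = Min {card F | F. finite F \<and> (\<forall>S\<in>F. is_rectangle R C Y S) \<and> supp R C Y \<subseteq> \<Union>F}"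

definition minimally_non_firm :: "nat set \<Rightarrow> nat set \<Rightarrow> (nat \<Rightarrow> nat \<Rightarrow> gentry) \<Rightarrow> bool" where
  "minimally_non_firm R C Y \<longleftrightarrow> iso_num R C Y < br R C Y \<and>
     (\<forall>I J. I \<subseteq> R \<and> J \<subseteq> C \<and> (I \<noteq> R \<or> J \<noteq> C) \<longrightarrow> iso_num I J Y = br I J Y)"

end

theory Submission
  imports Defs
begin

text \<open>Suppose row i has at most one non-zero entry. If it has no 1, deleting the row keeps
  the support, so i(Y) cannot drop while br(Y) cannot grow. Otherwise its only non-zero entry
  is a 1 at (i,j); no rectangle joins (i,j) to an entry outside column j, so deleting column j
  lowers i(Y) by at least one, while covering column j by one extra rectangle shows br(Y)
  drops by at most one. Either way the proper submatrix would inherit i < br, contradicting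
  minimality. Columns are symmetric.\<close>

lemma finite_supp: "finite R \<Longrightarrow> finite C \<Longrightarrow> finite (supp R C Y)"
  unfolding supp_def by (rule finite_subset[of _ "R \<times> C"]) auto

lemma isolated_subset_supp: "isolated R C Y X \<Longrightarrow> X \<subseteq> supp R C Y"
  unfolding isolated_def by blast

lemma is_rectangle_subset: "is_rectangle R C Y S \<Longrightarrow> S \<subseteq> R \<times> C"
  unfolding is_rectangle_def by auto

lemma is_rectangle_corner:
  "is_rectangle R C Y S \<Longrightarrow> (a, b) \<in> S \<Longrightarrow> (c, d) \<in> S \<Longrightarrow> Y a d \<noteq> Zero"
  unfolding is_rectangle_def by auto

lemma is_rectangle_singleton:
  assumes "p \<in> supp R C Y"
  shows "is_rectangle R C Y {p}"
proof -
  obtain i j where "p = (i, j)" "i \<in> R" "j \<in> C" "Y i j = One"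
    using assms unfolding supp_def by auto
  then show ?thesis unfolding is_rectangle_def by (intro exI[of _ "{i}"] exI[of _ "{j}"]) simp
qed

lemma is_rectangle_row:
  "i \<in> R \<Longrightarrow> is_rectangle R C Y ({i} \<times> {j \<in> C. Y i j \<noteq> Zero})"
  unfolding is_rectangle_def by (intro exI[of _ "{i}"] exI[of _ "{j \<in> C. Y i j \<noteq> Zero}"]) auto

lemma is_rectangle_col:
  "j \<in> C \<Longrightarrow> is_rectangle R C Y ({i \<in> R. Y i j \<noteq> Zero} \<times> {j})"
  unfolding is_rectangle_def by (intro exI[of _ "{i \<in> R. Y i j \<noteq> Zero}"] exI[of _ "{j}"]) auto

lemma is_rectangle_mono:
  assumes "is_rectangle R' C' Y S" "R' \<subseteq> R" "C' \<subseteq> C"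
  shows "is_rectangle R C Y S"
proof -
  obtain I J where "I \<subseteq> R'" "J \<subseteq> C'" "S = I \<times> J" "\<forall>i\<in>I. \<forall>j\<in>J. Y i j \<noteq> Zero"
    using assms(1) unfolding is_rectangle_def by blast
  then show ?thesis
    unfolding is_rectangle_def using assms(2,3) by (intro exI[of _ I] exI[of _ J]) auto
qed

lemma is_rectangle_restrict:
  assumes "is_rectangle R C Y S"
  shows "is_rectangle R' C' Y (S \<inter> R' \<times> C')"
proof -
  obtain I J where "S = I \<times> J" "\<forall>i\<in>I. \<forall>j\<in>J. Y i j \<noteq> Zero"
    using assms unfolding is_rectangle_def by blast
  then show ?thesis
    unfolding is_rectangle_def by (intro exI[of _ "I \<inter> R'"] exI[of _ "J \<inter> C'"]) auto
qed

lemma isolated_mono: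
  assumes "isolated R' C' Y X" "R' \<subseteq> R" "C' \<subseteq> C"
  shows "isolated R C Y X"
proof -
  have X: "X \<subseteq> supp R' C' Y" by (rule isolated_subset_supp[OF assms(1)])
  then have "X \<subseteq> R' \<times> C'" unfolding supp_def by auto
  then have "x \<notin> S \<or> y \<notin> S" if "is_rectangle R C Y S" "x \<in> X" "y \<in> X" "x \<noteq> y" for S x y
    using assms(1) is_rectangle_restrict[OF that(1), of R' C'] that(2-4)
    unfolding isolated_def by blast
  moreover have "X \<subseteq> supp R C Y" using X assms(2,3) unfolding supp_def by auto
  ultimately show ?thesis unfolding isolated_def by blast
qed

lemma finite_isolated_cards:
  assumes "finite R" "finite C"
  shows "finite {card X | X. isolated R C Y X}"
proof (rule finite_subset)
  show "{card X | X. isolated R C Y X} \<subseteq> {..card (supp R C Y)}"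
    using finite_supp[OF assms] by (auto intro: card_mono dest: isolated_subset_supp)
qed simp

lemma card_le_iso_num:
  assumes "finite R" "finite C" "isolated R C Y X"
  shows "card X \<le> iso_num R C Y"
  unfolding iso_num_def using finite_isolated_cards[OF assms(1,2)] assms(3) by (auto intro: Max_ge)

lemma iso_num_witness:
  assumes "finite R" "finite C"
  obtains X where "isolated R C Y X" "card X = iso_num R C Y"
proof -
  have "isolated R C Y {}" unfolding isolated_def by simp
  then have "{card X | X. isolated R C Y X} \<noteq> {}" by blast
  with finite_isolated_cards[OF assms] have "iso_num R C Y \<in> {card X | X. isolated R C Y X}"
    unfolding iso_num_def by (rule Max_in)
  then obtain X where "isolated R C Y X" "iso_num R C Y = card X" by blast
  then show ?thesis using that by simp
qed

lemma iso_num_mono: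
  assumes "finite R" "finite C" "R' \<subseteq> R" "C' \<subseteq> C"
  shows "iso_num R' C' Y \<le> iso_num R C Y"
proof -
  obtain X where X: "isolated R' C' Y X" "card X = iso_num R' C' Y"
    by (rule iso_num_witness[OF finite_subset[OF assms(3,1)] finite_subset[OF assms(4,2)]])
  then show ?thesis using card_le_iso_num[OF assms(1,2) isolated_mono[OF X(1) assms(3,4)]] by simp
qed

lemma iso_num_extend:
  assumes fin: "finite R" "finite C" and sub: "R' \<subseteq> R" "C' \<subseteq> C"
    and p: "p \<in> supp R C Y"
    and sep: "\<And>S q. is_rectangle R C Y S \<Longrightarrow> p \<in> S \<Longrightarrow> q \<in> supp R' C' Y \<Longrightarrow> q \<notin> S"
  shows "iso_num R' C' Y + 1 \<le> iso_num R C Y"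
proof -
  obtain X where X: "isolated R' C' Y X" "card X = iso_num R' C' Y"
    by (rule iso_num_witness[OF finite_subset[OF sub(1) fin(1)] finite_subset[OF sub(2) fin(2)]])
  have X_supp: "X \<subseteq> supp R' C' Y" by (rule isolated_subset_supp[OF X(1)])
  have "p \<notin> X" using sep[OF is_rectangle_singleton[OF p]] X_supp by blast
  moreover have "finite X"
    using X_supp finite_supp[OF finite_subset[OF sub(1) fin(1)] finite_subset[OF sub(2) fin(2)]]
    by (rule finite_subset)
  moreover have "isolated R C Y (insert p X)"
    using isolated_mono[OF X(1) sub] p sep X_supp unfolding isolated_def by blast
  ultimately show ?thesis using card_le_iso_num[OF fin, of Y "insert p X"] X(2) by simp
qed

lemma finite_cover_cards:
  assumes "finite R" "finite C"
  shows "finite {card F | F. finite F \<and> (\<forall>S\<in>F. is_rectangle R C Y S) \<and> supp R C Y \<subseteq> \<Union>F}"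
proof (rule finite_subset)
  show "{card F | F. finite F \<and> (\<forall>S\<in>F. is_rectangle R C Y S) \<and> supp R C Y \<subseteq> \<Union>F}
      \<subseteq> {..card (Pow (R \<times> C))}"
    using assms by (auto intro!: card_mono dest: is_rectangle_subset)
qed simp

lemma br_le_card:
  assumes "finite R" "finite C" "finite F" "\<forall>S\<in>F. is_rectangle R C Y S" "supp R C Y \<subseteq> \<Union>F"
  shows "br R C Y \<le> card F"
  unfolding br_def using finite_cover_cards[OF assms(1,2)] assms(3-5) by (auto intro: Min_le)

lemma br_witness:
  assumes "finite R" "finite C"
  obtains F where "finite F" "\<forall>S\<in>F. is_rectangle R C Y S" "supp R C Y \<subseteq> \<Union>F"
    "card F = br R C Y"
proof -
  let ?covers = "{card F | F. finite F \<and> (\<forall>S\<in>F. is_rectangle R C Y S) \<and> supp R C Y \<subseteq> \<Union>F}"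
  let ?singletons = "(\<lambda>p. {p}) ` supp R C Y"
  have "finite ?singletons" "\<forall>S\<in>?singletons. is_rectangle R C Y S" "supp R C Y \<subseteq> \<Union>?singletons"
    using finite_supp[OF assms] is_rectangle_singleton by auto
  then have "?covers \<noteq> {}" by blast
  with finite_cover_cards[OF assms] have "br R C Y \<in> ?covers" unfolding br_def by (rule Min_in)
  then obtain F where "finite F" "\<forall>S\<in>F. is_rectangle R C Y S" "supp R C Y \<subseteq> \<Union>F"
    "br R C Y = card F" by blast
  then show ?thesis using that by simp
qed

lemma br_le_br_add:
  assumes fin: "finite R" "finite C" and sub: "R' \<subseteq> R" "C' \<subseteq> C"
    and G: "finite G" "\<forall>S\<in>G. is_rectangle R C Y S"
    and cover: "supp R C Y \<subseteq> \<Union>G \<union> supp R' C' Y"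
  shows "br R C Y \<le> br R' C' Y + card G"
proof -
  obtain F where F: "finite F" "\<forall>S\<in>F. is_rectangle R' C' Y S" "supp R' C' Y \<subseteq> \<Union>F"
    "card F = br R' C' Y"
    by (rule br_witness[OF finite_subset[OF sub(1) fin(1)] finite_subset[OF sub(2) fin(2)]])
  have "br R C Y \<le> card (G \<union> F)"
    using F G cover is_rectangle_mono[OF _ sub] by (intro br_le_card[OF fin]) auto
  also have "\<dots> \<le> card G + card F" by (rule card_Un_le)
  finally show ?thesis using F(4) by simp
qed

lemma br_le_br_of_supp_subset:
  assumes "finite R" "finite C" "R' \<subseteq> R" "C' \<subseteq> C" "supp R C Y \<subseteq> supp R' C' Y"
  shows "br R C Y \<le> br R' C' Y"
  using br_le_br_add[OF assms(1-4), of "{}"] assms(5) by simp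

lemma minimally_non_firm_deletion:
  assumes "minimally_non_firm R C Y" "R' \<subseteq> R" "C' \<subseteq> C" "R' \<noteq> R \<or> C' \<noteq> C"
    and "iso_num R' C' Y + k \<le> iso_num R C Y"
  shows "br R' C' Y + k < br R C Y"
  using assms unfolding minimally_non_firm_def by auto

lemma eq_if_card_less_two:
  assumes "finite A" "\<not> 2 \<le> card A" "a \<in> A" "b \<in> A"
  shows "a = b"
  using assms card_le_Suc0_iff_eq[OF assms(1)] by simp

lemma minimally_non_firm_row:
  assumes fin: "finite R" "finite C" and mnf: "minimally_non_firm R C Y" and i: "i \<in> R"
  shows "2 \<le> card {j \<in> C. Y i j \<noteq> Zero}"
proof (rule ccontr)
  assume "\<not> ?thesis"
  then have uniq: "a = b" if "a \<in> C" "b \<in> C" "Y i a \<noteq> Zero" "Y i b \<noteq> Zero" for a b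
    using eq_if_card_less_two[of "{j \<in> C. Y i j \<noteq> Zero}" a b] fin that by simp
  show False
  proof (cases "\<exists>j\<in>C. Y i j = One")
    case False
    have "iso_num (R - {i}) C Y + 0 \<le> iso_num R C Y" using iso_num_mono[OF fin] by simp
    then have "br (R - {i}) C Y < br R C Y"
      using minimally_non_firm_deletion[OF mnf, of "R - {i}" C 0] i by auto
    moreover have "br R C Y \<le> br (R - {i}) C Y"
      using False by (intro br_le_br_of_supp_subset[OF fin]) (auto simp: supp_def)
    ultimately show False by simp
  next
    case True
    then obtain j where j: "j \<in> C" "Y i j = One" by blast
    have "iso_num R (C - {j}) Y + 1 \<le> iso_num R C Y"
    proof (rule iso_num_extend[OF fin, where p = "(i, j)"])
      show "(i, j) \<in> supp R C Y" using i j by (simp add: supp_def)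
      show "q \<notin> S" if "is_rectangle R C Y S" "(i, j) \<in> S" "q \<in> supp R (C - {j}) Y" for S q
        using that is_rectangle_corner[OF that(1,2)] uniq j by (auto simp: supp_def)
    qed auto
    then have "br R (C - {j}) Y + 1 < br R C Y"
      using minimally_non_firm_deletion[OF mnf, of R "C - {j}" 1] j by auto
    moreover have "br R C Y \<le> br R (C - {j}) Y + card {{a \<in> R. Y a j \<noteq> Zero} \<times> {j}}"
      using is_rectangle_col[OF j(1)] by (intro br_le_br_add[OF fin]) (auto simp: supp_def)
    ultimately show False by simp
  qed
qed

lemma minimally_non_firm_col:
  assumes fin: "finite R" "finite C" and mnf: "minimally_non_firm R C Y" and j: "j \<in> C"
  shows "2 \<le> card {i \<in> R. Y i j \<noteq> Zero}"
proof (rule ccontr)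
  assume "\<not> ?thesis"
  then have uniq: "a = b" if "a \<in> R" "b \<in> R" "Y a j \<noteq> Zero" "Y b j \<noteq> Zero" for a b
    using eq_if_card_less_two[of "{i \<in> R. Y i j \<noteq> Zero}" a b] fin that by simp
  show False
  proof (cases "\<exists>i\<in>R. Y i j = One")
    case False
    have "iso_num R (C - {j}) Y + 0 \<le> iso_num R C Y" using iso_num_mono[OF fin] by simp
    then have "br R (C - {j}) Y < br R C Y"
      using minimally_non_firm_deletion[OF mnf, of R "C - {j}" 0] j by auto
    moreover have "br R C Y \<le> br R (C - {j}) Y"
      using False by (intro br_le_br_of_supp_subset[OF fin]) (auto simp: supp_def)
    ultimately show False by simp
  next
    case True
    then obtain i where i: "i \<in> R" "Y i j = One" by blast
    have "iso_num (R - {i}) C Y + 1 \<le> iso_num R C Y"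
    proof (rule iso_num_extend[OF fin, where p = "(i, j)"])
      show "(i, j) \<in> supp R C Y" using i j by (simp add: supp_def)
      show "q \<notin> S" if "is_rectangle R C Y S" "(i, j) \<in> S" "q \<in> supp (R - {i}) C Y" for S q
        using that is_rectangle_corner[OF that(1) _ that(2)] uniq i by (auto simp: supp_def)
    qed auto
    then have "br (R - {i}) C Y + 1 < br R C Y"
      using minimally_non_firm_deletion[OF mnf, of "R - {i}" C 1] i by auto
    moreover have "br R C Y \<le> br (R - {i}) C Y + card {{i} \<times> {b \<in> C. Y i b \<noteq> Zero}}"
      using is_rectangle_row[OF i(1)] by (intro br_le_br_add[OF fin]) (auto simp: supp_def)
    ultimately show False by simp
  qed
qed

theorem lemma5:
  fixes m n :: nat and Y :: "nat \<Rightarrow> nat \<Rightarrow> gentry"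
  assumes "minimally_non_firm {..<m} {..<n} Y"
  shows "(\<forall>i<m. card {j. j < n \<and> Y i j \<noteq> Zero} \<ge> 2) \<and>
         (\<forall>j<n. card {i. i < m \<and> Y i j \<noteq> Zero} \<ge> 2)"
  using minimally_non_firm_row[OF _ _ assms] minimally_non_firm_col[OF _ _ assms] by simp

end
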